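(* Let $K$ and $L$ be number fields (inside a fixed algebraic closure of $\mathbb{Q}$). Then \[\frac{1}{[\widetilde K\widetilde L:\mathbb{Q}]}\le \delta_{K,L}\le 1,\] where equality on the right holds if and only if $\widetilde K=\widetilde L$, and equality on the left holds if and only if $K=\mathbb{Q}$ or $L=\mathbb{Q}$.
   Context: $\widetilde E$ denotes the Galois closure of a number field $E$ over $\mathbb{Q}$, and $\widetilde K\widetilde L$ the compositum. $\delta_{K,L}:=\frac{2}{[\widetilde K\widetilde L:\mathbb{Q}]}+1-\frac{1}{[\widetilde K:\mathbb{Q}]}-\frac{1}{[\widetilde L:\mathbb{Q}]}$. *)

theory Defs
  imports Complex_Main "HOL-Computational_Algebra.Polynomial"
begin

text \<open>We work inside the algebraic closure of the rationals contained in the complex numbers.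
  Subfields of the complex numbers automatically contain the rationals.\<close>

definition qscale :: "rat \<Rightarrow> complex \<Rightarrow> complex" where
  "qscale r z = of_rat r * z"

definition is_subfield :: "complex set \<Rightarrow> bool" where
  "is_subfield F \<longleftrightarrow> 0 \<in> F \<and> 1 \<in> F \<and>
     (\<forall>x\<in>F. \<forall>y\<in>F. x + y \<in> F \<and> x * y \<in> F) \<and>
     (\<forall>x\<in>F. - x \<in> F) \<and> (\<forall>x\<in>F. x \<noteq> 0 \<longrightarrow> inverse x \<in> F)"

definition qdegree :: "complex set \<Rightarrow> nat" where
  "qdegree F = vector_space.dim qscale F"

definition number_field :: "complex set \<Rightarrow> bool" where
  "number_field F \<longleftrightarrow> is_subfield F \<and> (\<exists>B. finite B \<and> F \<subseteq> module.span qscale B)"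

definition normal_over_Q :: "complex set \<Rightarrow> bool" where
  "normal_over_Q F \<longleftrightarrow> (\<forall>x\<in>F. \<forall>p :: rat poly. irreducible p \<and> poly (map_poly of_rat p) x = 0 \<longrightarrow>
       (\<forall>y. poly (map_poly of_rat p) y = 0 \<longrightarrow> y \<in> F))"

definition galois_closure :: "complex set \<Rightarrow> complex set" where
  "galois_closure E = \<Inter>{F. E \<subseteq> F \<and> is_subfield F \<and> normal_over_Q F}"

definition compositum :: "complex set \<Rightarrow> complex set \<Rightarrow> complex set" where
  "compositum A B = \<Inter>{F. A \<union> B \<subseteq> F \<and> is_subfield F}"

definition delta :: "complex set \<Rightarrow> complex set \<Rightarrow> real" where
  "delta K L = 2 / real (qdegree (compositum (galois_closure K) (galois_closure L))) + 1
     - 1 / real (qdegree (galois_closure K)) - 1 / real (qdegree (galois_closure L))"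

end

(*
  Write a, b and n for the degrees over Q of the Galois closures of K and L and of their compositum.
  The compositum is spanned by products of basis elements, so a, b <= n <= a b, and the identities
    delta - 1/n = (1/n - 1/(a b)) + (1 - 1/a) (1 - 1/b),     1 - delta = (1/a - 1/n) + (1/b - 1/n)
  give both bounds with their equality cases: a = b = n forces both closures to equal the
  compositum, and a = 1 forces K = Q.

  The substance is that these degrees are finite. The roots of a rational polynomial f vanishing on
  a basis of a number field K generate a Q-algebra N of finite dimension, hence a field, which
  contains K. It is normal: if x in N and y are roots of one irreducible polynomial, the embedding
  of Q(x) sending x to y extends, one root of f at a time, to a field containing N; the extension
  permutes the roots of f, so it maps N into N and y, the image of x, lies in N.
*)

theory Submission
  imports Defs
    "HOL-Computational_Algebra.Field_as_Ring"
    "HOL-Computational_Algebra.Polynomial_Factorial"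
    "HOL-Computational_Algebra.Fundamental_Theorem_Algebra"
begin

section \<open>Finite dimension over the rationals\<close>

interpretation Q: vector_space qscale
  by unfold_locales (auto simp: qscale_def algebra_simps of_rat_add of_rat_mult)

definition Q_finite_dim :: "complex set \<Rightarrow> bool" where
  "Q_finite_dim V \<longleftrightarrow> (\<exists>B. finite B \<and> V \<subseteq> Q.span B)"

lemma Q_finite_dim_subset: "Q_finite_dim U \<Longrightarrow> V \<subseteq> U \<Longrightarrow> Q_finite_dim V"
  unfolding Q_finite_dim_def by blast

lemma Q_finite_dim_basis:
  assumes "Q_finite_dim V"
  obtains B where "B \<subseteq> V" "Q.independent B" "V \<subseteq> Q.span B" "card B = Q.dim V" "finite B"
proof -
  obtain W where W: "finite W" "V \<subseteq> Q.span W" using assms Q_finite_dim_def by auto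
  obtain B where B: "B \<subseteq> V" "Q.independent B" "V \<subseteq> Q.span B" "card B = Q.dim V"
    using Q.basis_exists by blast
  have "finite B" using Q.independent_span_bound[OF W(1) B(2)] B(1) W(2) by auto
  then show ?thesis using B that by blast
qed

lemma Q_dim_mono:
  assumes "Q_finite_dim U" "V \<subseteq> U"
  shows "Q.dim V \<le> Q.dim U"
proof -
  obtain B where B: "U \<subseteq> Q.span B" "card B = Q.dim U" "finite B"
    using Q_finite_dim_basis[OF assms(1)] by metis
  have "Q.dim V \<le> card B" using Q.dim_le_card[of V B] assms(2) B by blast
  then show ?thesis using B(2) by simp
qed

lemma Q_subspace_eq_if_dim_eq:
  assumes "Q_finite_dim U" "V \<subseteq> U" "Q.subspace V" "Q.dim V = Q.dim U"
  shows "V = U"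
proof (rule ccontr)
  assume "V \<noteq> U"
  then obtain u where u: "u \<in> U" "u \<notin> V" using assms(2) by blast
  obtain B where B: "B \<subseteq> V" "Q.independent B" "V \<subseteq> Q.span B" "card B = Q.dim V" "finite B"
    using Q_finite_dim_basis[OF Q_finite_dim_subset[OF assms(1,2)]] by blast
  have "Q.span B = V" using Q.span_subspace[OF B(1,3) assms(3)] .
  then have "Q.independent (insert u B)"
    using Q.independent_insertI[of u B] u B(2) by auto
  then have "card (insert u B) = Q.dim (insert u B)" using Q.dim_eq_card_independent by simp
  also have "\<dots> \<le> Q.dim U" using Q_dim_mono[OF assms(1)] u(1) B(1) assms(2) by auto
  finally have "card (insert u B) \<le> Q.dim U" .
  moreover have "u \<notin> B" using u(2) B(1) by blast
  ultimately show False using B(4,5) assms(4) by simp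
qed

lemma Q_span_one: "Q.span {1} = \<rat>"
  by (auto simp: Q.span_singleton qscale_def Rats_def)

lemma Q_dim_Rats: "Q.dim \<rat> = 1"
  using Q.dim_span_eq_card_independent[of "{1}"] by (simp add: Q_span_one)

lemma Q_finite_dim_Rats: "Q_finite_dim \<rat>"
  unfolding Q_finite_dim_def using Q_span_one by blast

lemma Q_span_mult:
  assumes "x \<in> Q.span A" "y \<in> Q.span B"
  shows "x * y \<in> Q.span {a * b |a b. a \<in> A \<and> b \<in> B}"
proof -
  let ?P = "{a * b |a b. a \<in> A \<and> b \<in> B}"
  have left: "a * y \<in> Q.span ?P" if "a \<in> A" for a
    using assms(2)
  proof (induction rule: Q.span_induct_alt)
    case (step c b y)
    have "a * (qscale c b + y) = qscale c (a * b) + a * y" by (simp add: qscale_def algebra_simps)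
    moreover have "a * b \<in> Q.span ?P" using that step by (auto intro: Q.span_base)
    ultimately show ?case using step by (auto intro!: Q.span_add Q.span_scale)
  qed (simp add: Q.span_zero)
  show ?thesis using assms(1)
  proof (induction rule: Q.span_induct_alt)
    case (step c a x)
    have "(qscale c a + x) * y = qscale c (a * y) + x * y" by (simp add: qscale_def algebra_simps)
    then show ?case using step left by (auto intro!: Q.span_add Q.span_scale)
  qed (simp add: Q.span_zero)
qed

section \<open>Subalgebras and polynomials over them\<close>

definition Q_subalgebra :: "complex set \<Rightarrow> bool" where
  "Q_subalgebra R \<longleftrightarrow> \<rat> \<subseteq> R \<and> (\<forall>x\<in>R. \<forall>y\<in>R. x + y \<in> R \<and> x * y \<in> R)"

definition poly_over :: "complex set \<Rightarrow> complex poly \<Rightarrow> bool" where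
  "poly_over F p \<longleftrightarrow> (\<forall>i. coeff p i \<in> F)"

lemma poly_over_mono: "poly_over F p \<Longrightarrow> F \<subseteq> G \<Longrightarrow> poly_over G p"
  by (auto simp: poly_over_def)

lemma poly_over_Rats_map_of_rat: "poly_over \<rat> (map_poly of_rat p)"
  by (auto simp: poly_over_def coeff_map_poly)

context
  fixes R assumes R: "Q_subalgebra R"
begin

lemma Rats_subset_Q_subalgebra: "\<rat> \<subseteq> R"
  and Q_subalgebra_add: "x \<in> R \<Longrightarrow> y \<in> R \<Longrightarrow> x + y \<in> R"
  and Q_subalgebra_mult: "x \<in> R \<Longrightarrow> y \<in> R \<Longrightarrow> x * y \<in> R"
  using R by (auto simp: Q_subalgebra_def)

lemma Q_subalgebra_0: "0 \<in> R" and Q_subalgebra_1: "1 \<in> R"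
  using Rats_subset_Q_subalgebra by auto

lemma Q_subalgebra_uminus: "x \<in> R \<Longrightarrow> - x \<in> R"
  using Q_subalgebra_mult[OF subsetD[OF Rats_subset_Q_subalgebra, of "-1"], of x] by simp

lemma Q_subalgebra_diff: "x \<in> R \<Longrightarrow> y \<in> R \<Longrightarrow> x - y \<in> R"
  using Q_subalgebra_add[of x "- y"] Q_subalgebra_uminus by simp

lemma Q_subalgebra_subspace: "Q.subspace R"
  unfolding Q.subspace_def qscale_def
  using Q_subalgebra_0 Q_subalgebra_add
    Q_subalgebra_mult[OF subsetD[OF Rats_subset_Q_subalgebra Rats_of_rat]] by auto

lemma Q_subalgebra_sum: "(\<And>x. x \<in> A \<Longrightarrow> f x \<in> R) \<Longrightarrow> sum f A \<in> R"
  using Q.subspace_sum Q_subalgebra_subspace by blast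

lemma Q_subalgebra_power: "x \<in> R \<Longrightarrow> x ^ n \<in> R"
  by (induct n) (auto simp: Q_subalgebra_1 Q_subalgebra_mult)

lemma Q_subalgebra_poly: "poly_over R p \<Longrightarrow> x \<in> R \<Longrightarrow> poly p x \<in> R"
  unfolding poly_altdef poly_over_def
  by (auto intro!: Q_subalgebra_sum Q_subalgebra_mult Q_subalgebra_power)

lemma poly_over_0: "poly_over R 0"
  and poly_over_const: "c \<in> R \<Longrightarrow> poly_over R [:c:]"
  and poly_over_monom: "c \<in> R \<Longrightarrow> poly_over R (monom c n)"
  and poly_over_smult: "c \<in> R \<Longrightarrow> poly_over R p \<Longrightarrow> poly_over R (smult c p)"
  by (auto simp: poly_over_def coeff_pCons Q_subalgebra_0 Q_subalgebra_mult split: nat.split)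

lemma poly_over_add: "poly_over R p \<Longrightarrow> poly_over R q \<Longrightarrow> poly_over R (p + q)"
  and poly_over_diff: "poly_over R p \<Longrightarrow> poly_over R q \<Longrightarrow> poly_over R (p - q)"
  and poly_over_mult: "poly_over R p \<Longrightarrow> poly_over R q \<Longrightarrow> poly_over R (p * q)"
  by (auto simp: poly_over_def coeff_mult Q_subalgebra_add Q_subalgebra_diff
      intro!: Q_subalgebra_sum Q_subalgebra_mult)

lemma poly_over_prod: "(\<And>x. x \<in> A \<Longrightarrow> poly_over R (f x)) \<Longrightarrow> poly_over R (prod f A)"
  by (induct A rule: infinite_finite_induct)
    (auto simp: poly_over_mult poly_over_const[OF Q_subalgebra_1, unfolded one_pCons[symmetric]])

end

lemma subfield_of_int:
  assumes "is_subfield F" shows "of_int n \<in> F"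
proof -
  have F: "0 \<in> F" "1 \<in> F" "\<And>x y. x \<in> F \<Longrightarrow> y \<in> F \<Longrightarrow> x + y \<in> F" "\<And>x. x \<in> F \<Longrightarrow> -x \<in> F"
    using assms by (auto simp: is_subfield_def)
  have nat: "of_nat m \<in> F" for m by (induct m) (auto simp: F)
  show ?thesis
    using nat[of "nat n"] F(4)[OF nat[of "nat (- n)"]] by (cases "n \<ge> 0") auto
qed

lemma Rats_subset_subfield:
  assumes "is_subfield F" shows "\<rat> \<subseteq> F"
proof
  fix x :: complex assume "x \<in> \<rat>"
  then obtain a b where ab: "b > 0" "x = of_int a / of_int b" by (rule Rats_cases')
  have "inverse (of_int b :: complex) \<in> F"
    using assms subfield_of_int[OF assms, of b] ab(1) by (auto simp: is_subfield_def)
  then show "x \<in> F"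
    using ab(2) assms subfield_of_int[OF assms, of a] by (auto simp: is_subfield_def divide_inverse)
qed

lemma subfield_imp_Q_subalgebra: "is_subfield F \<Longrightarrow> Q_subalgebra F"
  using Rats_subset_subfield by (auto simp: Q_subalgebra_def is_subfield_def)

lemma is_subfield_Rats: "is_subfield \<rat>"
  by (auto simp: is_subfield_def)

lemma Q_subalgebra_Rats: "Q_subalgebra \<rat>"
  using subfield_imp_Q_subalgebra[OF is_subfield_Rats] .

lemma algebraic_if_powers_dependent:
  assumes I: "finite I" "inj_on (\<lambda>i. z ^ i) I" and dep: "Q.dependent ((\<lambda>i. z ^ i) ` I)"
  obtains p where "poly_over \<rat> p" "p \<noteq> 0" "poly p z = 0"
proof -
  obtain T u where T: "T \<subseteq> (\<lambda>i. z ^ i) ` I" "(\<Sum>v\<in>T. qscale (u v) v) = 0" "\<exists>v\<in>T. u v \<noteq> 0"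
    using dep unfolding Q.dependent_explicit by blast
  define c where "c i = (if z ^ i \<in> T then u (z ^ i) else 0)" for i
  define p where "p = (\<Sum>i\<in>I. monom (of_rat (c i) :: complex) i)"
  have coeff_p: "coeff p i = (if i \<in> I then of_rat (c i) else 0)" for i
    using I(1) by (simp add: p_def coeff_sum)
  obtain i where "i \<in> I" "z ^ i \<in> T" "u (z ^ i) \<noteq> 0" using T(1,3) by auto
  then have "coeff p i \<noteq> 0" by (simp add: coeff_p c_def)
  then have "p \<noteq> 0" by auto
  moreover have "poly_over \<rat> p" using coeff_p by (auto simp: poly_over_def)
  moreover have "poly p z = 0"
  proof -
    define J where "J = {i \<in> I. z ^ i \<in> T}"
    have "poly p z = (\<Sum>i\<in>I. of_rat (c i) * z ^ i)"
      by (simp add: p_def poly_sum poly_monom)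
    also have "\<dots> = (\<Sum>i\<in>J. of_rat (u (z ^ i)) * z ^ i)"
      using I(1) by (intro sum.mono_neutral_cong_right) (auto simp: J_def c_def)
    also have "\<dots> = (\<Sum>v\<in>(\<lambda>i. z ^ i) ` J. of_rat (u v) * v)"
      by (rule sum.reindex[symmetric, unfolded comp_def])
        (rule inj_on_subset[OF I(2)], auto simp: J_def)
    also have "(\<lambda>i. z ^ i) ` J = T" using T(1) by (auto simp: J_def)
    finally show ?thesis using T(2) by (simp add: qscale_def)
  qed
  ultimately show ?thesis using that by blast
qed

lemma algebraic_if_powers_in_Q_finite_dim:
  assumes "Q_finite_dim V" "\<And>i. z ^ i \<in> V"
  obtains p where "poly_over \<rat> p" "p \<noteq> 0" "poly p z = 0"
proof -
  obtain W where W: "finite W" "V \<subseteq> Q.span W" using assms(1) Q_finite_dim_def by auto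
  show ?thesis
  proof (cases "inj_on (\<lambda>i. z ^ i) {..card W}")
    case True
    have "card ((\<lambda>i. z ^ i) ` {..card W}) = card W + 1" using True by (simp add: card_image)
    moreover have "(\<lambda>i. z ^ i) ` {..card W} \<subseteq> Q.span W" using assms(2) W(2) by auto
    ultimately have "Q.dependent ((\<lambda>i. z ^ i) ` {..card W})"
      using Q.independent_span_bound[OF W(1)] by (metis Suc_eq_plus1 not_less_eq_eq order_refl)
    then show ?thesis using algebraic_if_powers_dependent[OF _ True] that by blast
  next
    case False
    then obtain i j where ij: "i \<noteq> j" "z ^ i = z ^ j" unfolding inj_on_def by auto
    define p where "p = monom (1::complex) j - monom 1 i"
    have "coeff p j = 1" using ij by (simp add: p_def)
    then have "p \<noteq> 0" by auto
    moreover have "poly p z = 0" using ij by (simp add: p_def poly_monom)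
    moreover have "poly_over \<rat> p" by (auto simp: poly_over_def p_def)
    ultimately show ?thesis using that by blast
  qed
qed

lemma inverse_in_Q_subalgebra:
  assumes R: "Q_subalgebra R" and z: "z \<in> R" "z \<noteq> 0"
    and p: "poly_over \<rat> p" "p \<noteq> 0" "poly p z = 0"
  shows "inverse z \<in> R"
proof -
  \<comment> \<open>Write \<open>p = X\<^sup>k (c + X q')\<close> with \<open>c \<noteq> 0\<close>; then \<open>z\<^sup>-\<^sup>1 = - q'(z) / c\<close>.\<close>
  obtain q where q: "p = [:0, 1:] ^ order 0 p * q" "\<not> [:0, 1:] dvd q"
    using order_decomp[OF p(2), of 0] by auto
  have "[:0, 1:] ^ order 0 p = (monom 1 (order 0 p) :: complex poly)" by (simp add: monom_altdef)
  then have "coeff p (i + order 0 p) = coeff q i" for i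
    by (subst q(1)) (simp add: coeff_monom_mult)
  then have q_over: "poly_over \<rat> q" using p(1) unfolding poly_over_def by metis
  obtain c q' where cq: "q = pCons c q'" by (cases q) auto
  have "poly q 0 \<noteq> 0" using q(2) by (simp add: poly_eq_0_iff_dvd)
  then have c: "c \<noteq> 0" "c \<in> \<rat>" using q_over cq by (auto simp: poly_over_def) (metis coeff_pCons_0)
  have "poly q z = 0" using p(3) z(2) by (subst (asm) q(1)) simp
  then have "c + z * poly q' z = 0" using cq by simp
  then have inverse_z: "inverse z = - poly q' z * inverse c" using z(2) c(1)
    by (simp add: field_simps) (metis add.commute add_eq_0_iff2)
  have "poly_over \<rat> q'" using q_over cq by (auto simp: poly_over_def) (metis coeff_pCons_Suc)
  then have "poly q' z \<in> R"
    using Q_subalgebra_poly[OF R poly_over_mono[OF _ Rats_subset_Q_subalgebra[OF R]] z(1)] by blast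
  moreover have "inverse c \<in> R" using c Rats_subset_Q_subalgebra[OF R] by auto
  ultimately show ?thesis
    unfolding inverse_z using Q_subalgebra_mult[OF R] Q_subalgebra_uminus[OF R] by simp
qed

lemma Q_subalgebra_finite_dim_imp_subfield:
  assumes "Q_subalgebra R" "Q_finite_dim R"
  shows "is_subfield R"
proof -
  have "inverse z \<in> R" if z: "z \<in> R" "z \<noteq> 0" for z
  proof -
    obtain p where "poly_over \<rat> p" "p \<noteq> 0" "poly p z = 0"
      using algebraic_if_powers_in_Q_finite_dim[OF assms(2) Q_subalgebra_power[OF assms(1) z(1)]] .
    then show ?thesis using inverse_in_Q_subalgebra assms(1) z by blast
  qed
  then show ?thesis using assms(1)
    by (auto simp: is_subfield_def Q_subalgebra_0 Q_subalgebra_1 Q_subalgebra_add Q_subalgebra_mult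
        Q_subalgebra_uminus)
qed

section \<open>Adjoining an algebraic element\<close>

lemma poly_over_divmod_monic:
  assumes F: "Q_subalgebra F" and r: "poly_over F r" "lead_coeff r = 1" "degree r > 0"
    and a: "poly_over F a"
  shows "\<exists>q m. poly_over F q \<and> poly_over F m \<and> a = q * r + m \<and> degree m < degree r"
  using a
proof (induction "degree a" arbitrary: a rule: less_induct)
  case (less a)
  show ?case
  proof (cases "degree a < degree r")
    case True
    then show ?thesis using less.prems poly_over_0[OF F] by (intro exI[of _ 0] exI[of _ a]) auto
  next
    case False
    define k where "k = degree a - degree r"
    define c where "c = lead_coeff a"
    define a' where "a' = a - monom c k * r"
    have c: "c \<in> F" using less.prems by (auto simp: poly_over_def c_def)
    have a': "poly_over F a'" unfolding a'_def
      by (intro poly_over_diff[OF F] poly_over_mult[OF F] poly_over_monom[OF F] less.prems r c)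
    have "coeff a' j = 0" if "j \<ge> degree a" for j
    proof (cases "j = degree a")
      case True
      then have "j - k = degree r" "\<not> j < k" using False k_def by auto
      then show ?thesis using True r(2) by (simp add: a'_def coeff_monom_mult c_def)
    next
      case False
      then have "j - k > degree r" "\<not> j < k" using that k_def \<open>\<not> degree a < degree r\<close> by auto
      then show ?thesis using False that by (simp add: a'_def coeff_monom_mult coeff_eq_0)
    qed
    then have "degree a' < degree a"
      using degree_le[of "degree a - 1" a'] False r(3) by fastforce
    then obtain q m where qm: "poly_over F q" "poly_over F m" "a' = q * r + m" "degree m < degree r"
      using less.hyps a' by blast
    have "a = (q + monom c k) * r + m" using qm(3) by (simp add: a'_def algebra_simps)
    moreover have "poly_over F (q + monom c k)"
      using poly_over_add[OF F] poly_over_monom[OF F] qm(1) c by blast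
    ultimately show ?thesis using qm by blast
  qed
qed

lemma monic_poly_over:
  assumes F: "is_subfield F" and p: "poly_over F p" "p \<noteq> 0"
  obtains r where "poly_over F r" "lead_coeff r = 1" "degree r = degree p"
    "\<And>x. poly r x = 0 \<longleftrightarrow> poly p x = 0"
proof
  have "lead_coeff p \<in> F" "lead_coeff p \<noteq> 0" using p by (auto simp: poly_over_def)
  then have "inverse (lead_coeff p) \<in> F" using F by (auto simp: is_subfield_def)
  then show "poly_over F (smult (inverse (lead_coeff p)) p)"
    using poly_over_smult[OF subfield_imp_Q_subalgebra[OF F]] p(1) by blast
qed (use p(2) in \<open>auto simp: lead_coeff_smult\<close>)

lemma degree_pos_if_monic_root: "lead_coeff (r::complex poly) = 1 \<Longrightarrow> poly r s = 0 \<Longrightarrow> degree r > 0"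
  by (metis degree_0_id one_neq_zero poly_1 one_pCons neq0_conv)

lemma min_poly_over:
  assumes F: "is_subfield F" and f: "poly_over F f" "f \<noteq> 0" "poly f s = 0"
  obtains r where "poly_over F r" "lead_coeff r = 1" "degree r > 0" "poly r s = 0"
    "\<And>a. poly_over F a \<Longrightarrow> poly a s = 0 \<Longrightarrow> \<exists>q. poly_over F q \<and> a = q * r"
proof -
  define D where "D = {degree r |r. poly_over F r \<and> r \<noteq> 0 \<and> poly r s = 0}"
  have "degree f \<in> D" using f unfolding D_def by blast
  then have "Least (\<lambda>d. d \<in> D) \<in> D" by (rule LeastI)
  then obtain r0 where r0: "poly_over F r0" "r0 \<noteq> 0" "poly r0 s = 0" "degree r0 = Least (\<lambda>d. d \<in> D)"
    unfolding D_def by auto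
  obtain r where r: "poly_over F r" "lead_coeff r = 1" "degree r = degree r0" "poly r s = 0"
    using monic_poly_over[OF F r0(1,2)] r0(3) by metis
  have deg_r: "degree r > 0" using degree_pos_if_monic_root r(2,4) .
  have "\<exists>q. poly_over F q \<and> a = q * r" if a: "poly_over F a" "poly a s = 0" for a
  proof -
    obtain q m where qm: "poly_over F q" "poly_over F m" "a = q * r + m" "degree m < degree r"
      using poly_over_divmod_monic[OF subfield_imp_Q_subalgebra[OF F] r(1,2) deg_r a(1)] by blast
    have "m = 0"
    proof (rule ccontr)
      assume "m \<noteq> 0"
      moreover have "poly m s = 0" using a(2) qm(3) r(4) by simp
      ultimately have "degree m \<in> D" using qm(2) unfolding D_def by blast
      then show False using Least_le[of "\<lambda>d. d \<in> D"] qm(4) r(3) r0(4) by fastforce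
    qed
    then show ?thesis using qm by auto
  qed
  then show ?thesis using that r(1,2,4) deg_r by blast
qed

definition adjoin :: "complex set \<Rightarrow> complex \<Rightarrow> complex set" where
  "adjoin F s = {poly a s |a. poly_over F a}"

context
  fixes F assumes F: "Q_subalgebra F"
begin

lemma Q_subalgebra_adjoin: "Q_subalgebra (adjoin F s)"
proof -
  have "x + y \<in> adjoin F s \<and> x * y \<in> adjoin F s" if xy: "x \<in> adjoin F s" "y \<in> adjoin F s" for x y
  proof -
    obtain a b where "poly_over F a" "poly_over F b" "x = poly a s" "y = poly b s"
      using xy by (auto simp: adjoin_def)
    moreover have "poly_over F (a + b)" "poly_over F (a * b)"
      using poly_over_add[OF F] poly_over_mult[OF F] calculation(1,2) by blast+
    ultimately show ?thesis
      unfolding adjoin_def by (metis (mono_tags) mem_Collect_eq poly_add poly_mult)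
  qed
  moreover have "\<rat> \<subseteq> adjoin F s"
    using poly_over_const[OF F] Rats_subset_Q_subalgebra[OF F] unfolding adjoin_def by force
  ultimately show ?thesis by (auto simp: Q_subalgebra_def)
qed

lemma subset_adjoin: "F \<subseteq> adjoin F s"
  using poly_over_const[OF F] unfolding adjoin_def by force

lemma mem_adjoin: "s \<in> adjoin F s"
  using poly_over_monom[OF F Q_subalgebra_1[OF F], of 1]
  unfolding adjoin_def by (force simp: poly_monom)

end

lemma Q_finite_dim_adjoin:
  assumes F: "is_subfield F" "Q_finite_dim F" and f: "poly_over F f" "f \<noteq> 0" "poly f s = 0"
  shows "Q_finite_dim (adjoin F s)"
proof -
  obtain r where r: "poly_over F r" "lead_coeff r = 1" "degree r > 0" "poly r s = 0"
    using min_poly_over[OF F(1) f] by blast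
  obtain B where B: "finite B" "F \<subseteq> Q.span B" using F(2) Q_finite_dim_def by auto
  define P where "P = {a * b |a b. a \<in> B \<and> b \<in> (\<lambda>i. s ^ i) ` {..<degree r}}"
  have "P = (\<lambda>(a, b). a * b) ` (B \<times> ((\<lambda>i. s ^ i) ` {..<degree r}))" by (auto simp: P_def)
  then have "finite P" using B by simp
  moreover have "adjoin F s \<subseteq> Q.span P"
  proof
    fix x assume "x \<in> adjoin F s"
    then obtain a where a: "poly_over F a" "x = poly a s" by (auto simp: adjoin_def)
    obtain q m where qm: "poly_over F m" "a = q * r + m" "degree m < degree r"
      using poly_over_divmod_monic[OF subfield_imp_Q_subalgebra[OF F(1)] r(1-3) a(1)] by blast
    have "x = poly m s" using a(2) qm(2) r(4) by simp
    also have "\<dots> = (\<Sum>i\<le>degree m. coeff m i * s ^ i)" by (simp add: poly_altdef)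
    also have "\<dots> \<in> Q.span P"
    proof (rule Q.span_sum)
      fix i assume "i \<in> {..degree m}"
      have "coeff m i \<in> Q.span B" using qm(1) B(2) by (auto simp: poly_over_def)
      moreover have "s ^ i \<in> Q.span ((\<lambda>i. s ^ i) ` {..<degree r})"
        using \<open>i \<in> {..degree m}\<close> qm(3) by (intro Q.span_base) auto
      ultimately show "coeff m i * s ^ i \<in> Q.span P" unfolding P_def by (rule Q_span_mult)
    qed
    finally show "x \<in> Q.span P" .
  qed
  ultimately show ?thesis unfolding Q_finite_dim_def by blast
qed

lemma subfield_adjoin:
  assumes F: "is_subfield F" "Q_finite_dim F" and f: "poly_over F f" "f \<noteq> 0" "poly f s = 0"
  shows "is_subfield (adjoin F s)"
  using Q_subalgebra_finite_dim_imp_subfield Q_subalgebra_adjoin subfield_imp_Q_subalgebra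
    Q_finite_dim_adjoin assms by blast

section \<open>Extending embeddings\<close>

definition ring_hom_on :: "complex set \<Rightarrow> (complex \<Rightarrow> complex) \<Rightarrow> bool" where
  "ring_hom_on F \<phi> \<longleftrightarrow>
     \<phi> 1 = 1 \<and> (\<forall>a\<in>F. \<forall>b\<in>F. \<phi> (a + b) = \<phi> a + \<phi> b \<and> \<phi> (a * b) = \<phi> a * \<phi> b)"

context
  fixes F \<phi> assumes F: "Q_subalgebra F" and \<phi>: "ring_hom_on F \<phi>"
begin

lemma ring_hom_on_add: "a \<in> F \<Longrightarrow> b \<in> F \<Longrightarrow> \<phi> (a + b) = \<phi> a + \<phi> b"
  and ring_hom_on_mult: "a \<in> F \<Longrightarrow> b \<in> F \<Longrightarrow> \<phi> (a * b) = \<phi> a * \<phi> b"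
  and ring_hom_on_1: "\<phi> 1 = 1"
  using \<phi> by (auto simp: ring_hom_on_def)

lemma ring_hom_on_0: "\<phi> 0 = 0"
  using ring_hom_on_add[of 0 0] Q_subalgebra_0[OF F] by simp

lemma ring_hom_on_uminus: "a \<in> F \<Longrightarrow> \<phi> (- a) = - \<phi> a"
  using ring_hom_on_add[of a "- a"] Q_subalgebra_uminus[OF F] ring_hom_on_0
  by (simp add: add_eq_0_iff)

lemma ring_hom_on_diff: "a \<in> F \<Longrightarrow> b \<in> F \<Longrightarrow> \<phi> (a - b) = \<phi> a - \<phi> b"
  using ring_hom_on_add[of a "- b"] ring_hom_on_uminus[of b] Q_subalgebra_uminus[OF F] by simp

lemma ring_hom_on_sum: "(\<And>x. x \<in> A \<Longrightarrow> f x \<in> F) \<Longrightarrow> \<phi> (sum f A) = (\<Sum>x\<in>A. \<phi> (f x))"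
proof (induct A rule: infinite_finite_induct)
  case (insert x A)
  then show ?case using ring_hom_on_add[of "f x" "sum f A"] Q_subalgebra_sum[OF F, of A f] by auto
qed (auto simp: ring_hom_on_0)

lemma ring_hom_on_of_int: "\<phi> (of_int n) = of_int n"
proof -
  have int: "of_int m \<in> F" for m using Rats_subset_Q_subalgebra[OF F] by auto
  have nat: "\<phi> (of_nat m) = of_nat m" for m
  proof (induct m)
    case (Suc m)
    then show ?case using ring_hom_on_add[of 1 "of_nat m"] int[of 1] int[of "int m"] ring_hom_on_1
      by (simp add: add.commute)
  qed (simp add: ring_hom_on_0)
  show ?thesis
    using nat[of "nat n"] nat[of "nat (- n)"] ring_hom_on_uminus[OF int[of "int (nat (- n))"]]
    by (cases "n \<ge> 0") auto
qed

lemma ring_hom_on_Rats: "x \<in> \<rat> \<Longrightarrow> \<phi> x = x"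
proof -
  assume "x \<in> \<rat>"
  then obtain a b where ab: "b > 0" "x = of_int a / of_int b" by (rule Rats_cases')
  have "x \<in> F" "of_int b \<in> F" using \<open>x \<in> \<rat>\<close> Rats_subset_Q_subalgebra[OF F] by auto
  then have "of_int b * \<phi> x = \<phi> (of_int b * x)" using ring_hom_on_mult ring_hom_on_of_int by simp
  also have "\<dots> = \<phi> (of_int a)" using ab by simp
  also have "\<dots> = of_int b * x" using ab by (simp add: ring_hom_on_of_int)
  finally show "\<phi> x = x" using ab(1) by simp
qed

lemma coeff_map_poly_ring_hom_on: "coeff (map_poly \<phi> a) n = \<phi> (coeff a n)"
  by (simp add: coeff_map_poly ring_hom_on_0)

lemma map_poly_ring_hom_on_add:
    "poly_over F a \<Longrightarrow> poly_over F b \<Longrightarrow> map_poly \<phi> (a + b) = map_poly \<phi> a + map_poly \<phi> b"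
  and map_poly_ring_hom_on_diff:
    "poly_over F a \<Longrightarrow> poly_over F b \<Longrightarrow> map_poly \<phi> (a - b) = map_poly \<phi> a - map_poly \<phi> b"
  by (auto intro!: poly_eqI simp: coeff_map_poly_ring_hom_on ring_hom_on_add ring_hom_on_diff
      poly_over_def)

lemma map_poly_ring_hom_on_mult:
  assumes "poly_over F a" "poly_over F b"
  shows "map_poly \<phi> (a * b) = map_poly \<phi> a * map_poly \<phi> b"
proof (rule poly_eqI)
  fix n
  have "\<phi> (\<Sum>i\<le>n. coeff a i * coeff b (n - i)) = (\<Sum>i\<le>n. \<phi> (coeff a i) * \<phi> (coeff b (n - i)))"
    using assms by (subst ring_hom_on_sum)
      (auto simp: poly_over_def ring_hom_on_mult Q_subalgebra_mult[OF F])
  then show "coeff (map_poly \<phi> (a * b)) n = coeff (map_poly \<phi> a * map_poly \<phi> b) n"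
    by (simp add: coeff_mult coeff_map_poly_ring_hom_on)
qed

lemma map_poly_ring_hom_on_const: "map_poly \<phi> [:c:] = [:\<phi> c:]"
  by (rule poly_eqI)
    (simp add: coeff_map_poly_ring_hom_on coeff_pCons ring_hom_on_0 split: nat.split)

lemma map_poly_ring_hom_on_Rats: "poly_over \<rat> a \<Longrightarrow> map_poly \<phi> a = a"
  by (rule poly_eqI) (simp add: coeff_map_poly_ring_hom_on ring_hom_on_Rats poly_over_def)

end

text \<open>The hypothesis on \<open>t\<close> makes \<open>poly a s \<mapsto> poly (map_poly \<phi> a) t\<close> well defined.\<close>
lemma ring_hom_on_adjoin_extend:
  assumes F: "Q_subalgebra F" and \<phi>: "ring_hom_on F \<phi>"
    and t: "\<And>a. poly_over F a \<Longrightarrow> poly a s = 0 \<Longrightarrow> poly (map_poly \<phi> a) t = 0"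
  obtains \<psi> where "ring_hom_on (adjoin F s) \<psi>" "\<And>c. c \<in> F \<Longrightarrow> \<psi> c = \<phi> c" "\<psi> s = t"
proof
  define \<psi> where "\<psi> z = poly (map_poly \<phi> (SOME a. poly_over F a \<and> poly a s = z)) t" for z
  have \<psi>_poly: "\<psi> (poly a s) = poly (map_poly \<phi> a) t" if a: "poly_over F a" for a
  proof -
    define a0 where "a0 = (SOME b. poly_over F b \<and> poly b s = poly a s)"
    have a0: "poly_over F a0" "poly a0 s = poly a s"
      using someI[of "\<lambda>b. poly_over F b \<and> poly b s = poly a s" a] a by (auto simp: a0_def)
    then have "poly (map_poly \<phi> (a0 - a)) t = 0"
      using t[of "a0 - a"] a poly_over_diff[OF F] by auto
    then show ?thesis using map_poly_ring_hom_on_diff[OF F \<phi> a0(1) a] by (simp add: \<psi>_def a0_def)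
  qed
  show "ring_hom_on (adjoin F s) \<psi>"
    unfolding ring_hom_on_def
  proof (intro conjI ballI)
    show "\<psi> 1 = 1"
      using \<psi>_poly[OF poly_over_const[OF F Q_subalgebra_1[OF F]]]
      by (simp add: map_poly_ring_hom_on_const[OF F \<phi>] ring_hom_on_1[OF F \<phi>])
  next
    fix x y assume "x \<in> adjoin F s" "y \<in> adjoin F s"
    then obtain a b where ab: "poly_over F a" "poly_over F b" "x = poly a s" "y = poly b s"
      by (auto simp: adjoin_def)
    show "\<psi> (x + y) = \<psi> x + \<psi> y"
      using \<psi>_poly[of "a + b"] \<psi>_poly[OF ab(1)] \<psi>_poly[OF ab(2)] ab poly_over_add[OF F]
        map_poly_ring_hom_on_add[OF F \<phi> ab(1,2)] by simp
    show "\<psi> (x * y) = \<psi> x * \<psi> y"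
      using \<psi>_poly[of "a * b"] \<psi>_poly[OF ab(1)] \<psi>_poly[OF ab(2)] ab poly_over_mult[OF F]
        map_poly_ring_hom_on_mult[OF F \<phi> ab(1,2)] by simp
  qed
  show "\<psi> c = \<phi> c" if "c \<in> F" for c
    using \<psi>_poly[OF poly_over_const[OF F that]] map_poly_ring_hom_on_const[OF F \<phi>] by simp
  show "\<psi> s = t"
    using \<psi>_poly[OF poly_over_monom[OF F Q_subalgebra_1[OF F], of 1]]
    by (simp add: poly_monom map_poly_monom ring_hom_on_0[OF F \<phi>] ring_hom_on_1[OF F \<phi>])
qed

lemma ring_hom_on_extend_to_root:
  assumes F: "is_subfield F" and \<phi>: "ring_hom_on F \<phi>"
    and f: "poly_over \<rat> f" "f \<noteq> 0" "poly f s = 0"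
  obtains \<psi> where "ring_hom_on (adjoin F s) \<psi>" "\<And>c. c \<in> F \<Longrightarrow> \<psi> c = \<phi> c" "poly f (\<psi> s) = 0"
proof -
  have QF: "Q_subalgebra F" using subfield_imp_Q_subalgebra[OF F] .
  have f_F: "poly_over F f" using poly_over_mono[OF f(1) Rats_subset_subfield[OF F]] .
  obtain r where r: "poly_over F r" "lead_coeff r = 1" "degree r > 0" "poly r s = 0"
    and r_dvd: "\<And>a. poly_over F a \<Longrightarrow> poly a s = 0 \<Longrightarrow> \<exists>q. poly_over F q \<and> a = q * r"
    using min_poly_over[OF F f_F f(2,3)] by blast
  have "coeff (map_poly \<phi> r) (degree r) = 1"
    using r(2) by (simp add: coeff_map_poly_ring_hom_on[OF QF \<phi>] ring_hom_on_1[OF QF \<phi>])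
  then have "degree r \<le> degree (map_poly \<phi> r)" by (simp add: le_degree)
  then have "degree (map_poly \<phi> r) = degree r" using map_poly_degree_leq[of \<phi> r] by simp
  then have "\<not> constant (poly (map_poly \<phi> r))" using r(3) constant_degree by force
  then obtain t where t: "poly (map_poly \<phi> r) t = 0" using fundamental_theorem_of_algebra by blast
  have roots: "poly (map_poly \<phi> a) t = 0" if a: "poly_over F a" "poly a s = 0" for a
  proof -
    obtain q where "poly_over F q" "a = q * r" using r_dvd[OF a] by blast
    then show ?thesis using t map_poly_ring_hom_on_mult[OF QF \<phi> _ r(1)] by simp
  qed
  obtain \<psi> where \<psi>: "ring_hom_on (adjoin F s) \<psi>" "\<And>c. c \<in> F \<Longrightarrow> \<psi> c = \<phi> c" "\<psi> s = t"
    using ring_hom_on_adjoin_extend[OF QF \<phi> roots] by blast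
  have "poly f t = 0" using roots[OF f_F f(3)] map_poly_ring_hom_on_Rats[OF QF \<phi> f(1)] by simp
  then show ?thesis using that \<psi> by simp
qed

lemma ring_hom_on_extend_to_roots:
  assumes F: "is_subfield F" "Q_finite_dim F" and \<phi>: "ring_hom_on F \<phi>"
    and f: "poly_over \<rat> f" "f \<noteq> 0" and S: "S \<subseteq> {z. poly f z = 0}"
  obtains E \<psi> where "is_subfield E" "Q_finite_dim E" "F \<subseteq> E" "S \<subseteq> E" "ring_hom_on E \<psi>"
    "\<And>c. c \<in> F \<Longrightarrow> \<psi> c = \<phi> c" "\<And>z. z \<in> S \<Longrightarrow> poly f (\<psi> z) = 0"
proof -
  have "finite S" using S poly_roots_finite[OF f(2)] finite_subset by blast
  then have "\<exists>E \<psi>. is_subfield E \<and> Q_finite_dim E \<and> F \<subseteq> E \<and> S \<subseteq> E \<and> ring_hom_on E \<psi> \<and>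
    (\<forall>c\<in>F. \<psi> c = \<phi> c) \<and> (\<forall>z\<in>S. poly f (\<psi> z) = 0)"
    using S
  proof (induction S rule: finite_induct)
    case empty
    then show ?case using F \<phi> by blast
  next
    case (insert s S)
    then obtain E \<psi> where E: "is_subfield E" "Q_finite_dim E" "F \<subseteq> E" "S \<subseteq> E"
      and \<psi>: "ring_hom_on E \<psi>" "\<forall>c\<in>F. \<psi> c = \<phi> c" "\<forall>z\<in>S. poly f (\<psi> z) = 0"
      by auto
    have s: "poly f s = 0" using insert.prems by simp
    obtain \<psi>' where \<psi>': "ring_hom_on (adjoin E s) \<psi>'" "\<And>c. c \<in> E \<Longrightarrow> \<psi>' c = \<psi> c"
      "poly f (\<psi>' s) = 0"
      using ring_hom_on_extend_to_root[OF E(1) \<psi>(1) f s] by blast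
    have f_E: "poly_over E f" using poly_over_mono[OF f(1) Rats_subset_subfield[OF E(1)]] .
    have "is_subfield (adjoin E s)" "Q_finite_dim (adjoin E s)"
      using subfield_adjoin[OF E(1,2) f_E f(2) s] Q_finite_dim_adjoin[OF E(1,2) f_E f(2) s] by auto
    moreover have "E \<subseteq> adjoin E s" "s \<in> adjoin E s"
      using subset_adjoin mem_adjoin subfield_imp_Q_subalgebra[OF E(1)] by auto
    ultimately show ?case using E \<psi> \<psi>' by (intro exI[of _ "adjoin E s"] exI[of _ \<psi>']) auto
  qed
  then show ?thesis using that by blast
qed

section \<open>Splitting fields\<close>

lemma map_poly_of_rat_add:
  "map_poly (of_rat :: rat \<Rightarrow> complex) (a + b) = map_poly of_rat a + map_poly of_rat b"
  by (rule poly_eqI) (simp add: coeff_map_poly of_rat_add)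

lemma map_poly_of_rat_mult:
  "map_poly (of_rat :: rat \<Rightarrow> complex) (a * b) = map_poly of_rat a * map_poly of_rat b"
  by (rule poly_eqI) (simp add: coeff_map_poly coeff_mult of_rat_sum of_rat_mult)

lemma irreducible_dvd_if_common_root:
  fixes p a :: "rat poly" and x :: complex
  assumes "irreducible p" "poly (map_poly of_rat p) x = 0" "poly (map_poly of_rat a) x = 0"
  shows "p dvd a"
proof (rule ccontr)
  assume "\<not> p dvd a"
  have "prime_elem p" using assms(1) by (rule field_poly_irreducible_imp_prime)
  then have "coprime p a" using \<open>\<not> p dvd a\<close> by (rule prime_elem_imp_coprime)
  then have "gcd p a = 1" by simp
  then obtain u v where "u * p + v * a = 1"
    using bezout_coefficients_fst_snd[of p a] by (metis (no_types))
  then have "poly (map_poly of_rat (u * p + v * a)) x = 1" by simp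
  then show False using assms(2,3) by (simp add: map_poly_of_rat_add map_poly_of_rat_mult)
qed

inductive_set Q_algebra_hull :: "complex set \<Rightarrow> complex set" for S where
  Rats: "x \<in> \<rat> \<Longrightarrow> x \<in> Q_algebra_hull S"
| base: "x \<in> S \<Longrightarrow> x \<in> Q_algebra_hull S"
| add: "x \<in> Q_algebra_hull S \<Longrightarrow> y \<in> Q_algebra_hull S \<Longrightarrow> x + y \<in> Q_algebra_hull S"
| mult: "x \<in> Q_algebra_hull S \<Longrightarrow> y \<in> Q_algebra_hull S \<Longrightarrow> x * y \<in> Q_algebra_hull S"

lemma Q_subalgebra_Q_algebra_hull: "Q_subalgebra (Q_algebra_hull S)"
  by (auto simp: Q_subalgebra_def intro: Q_algebra_hull.intros)

lemma Q_algebra_hull_minimal: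
  assumes "Q_subalgebra R" "S \<subseteq> R"
  shows "Q_algebra_hull S \<subseteq> R"
proof
  fix x assume "x \<in> Q_algebra_hull S"
  then show "x \<in> R"
    using assms by induction (auto simp: Q_subalgebra_def)
qed

lemma ring_hom_on_Q_algebra_hull:
  assumes F: "Q_subalgebra F" "Q_algebra_hull S \<subseteq> F" and \<psi>: "ring_hom_on F \<psi>" "\<psi> ` S \<subseteq> S"
    and z: "z \<in> Q_algebra_hull S"
  shows "\<psi> z \<in> Q_algebra_hull S"
  using z
proof induction
  case (Rats x)
  then show ?case using ring_hom_on_Rats[OF F(1) \<psi>(1)] by (auto intro: Q_algebra_hull.Rats)
next
  case (base x)
  then show ?case using \<psi>(2) by (auto intro: Q_algebra_hull.base)
next
  case (add x y)
  then have "\<psi> (x + y) = \<psi> x + \<psi> y" using ring_hom_on_add[OF F(1) \<psi>(1)] F(2) by blast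
  with add.IH show ?case by (simp add: Q_algebra_hull.add)
next
  case (mult x y)
  then have "\<psi> (x * y) = \<psi> x * \<psi> y" using ring_hom_on_mult[OF F(1) \<psi>(1)] F(2) by blast
  with mult.IH show ?case by (simp add: Q_algebra_hull.mult)
qed

lemma splitting_field_subfield:
  assumes f: "poly_over \<rat> f" "f \<noteq> 0"
  defines "N \<equiv> Q_algebra_hull {z. poly f z = 0}"
  shows "is_subfield N" "Q_finite_dim N"
proof -
  have "ring_hom_on \<rat> id" by (simp add: ring_hom_on_def)
  then obtain E \<psi> where E: "is_subfield E" "Q_finite_dim E" "\<rat> \<subseteq> E" "{z. poly f z = 0} \<subseteq> E"
    and "ring_hom_on E \<psi>" "\<And>c. c \<in> \<rat> \<Longrightarrow> \<psi> c = id c"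
      "\<And>z. z \<in> {z. poly f z = 0} \<Longrightarrow> poly f (\<psi> z) = 0"
    by (rule ring_hom_on_extend_to_roots[OF is_subfield_Rats Q_finite_dim_Rats _ f order_refl])
      (rule that)
  have "N \<subseteq> E"
    unfolding N_def by (rule Q_algebra_hull_minimal[OF subfield_imp_Q_subalgebra[OF E(1)] E(4)])
  then show "Q_finite_dim N" using Q_finite_dim_subset E(2) by blast
  then show "is_subfield N"
    using Q_subalgebra_finite_dim_imp_subfield Q_subalgebra_Q_algebra_hull unfolding N_def by blast
qed

lemma splitting_field_normal:
  assumes f: "poly_over \<rat> f" "f \<noteq> 0"
  defines "N \<equiv> Q_algebra_hull {z. poly f z = 0}"
  shows "normal_over_Q N"
  unfolding normal_over_Q_def
proof (intro ballI allI impI)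
  fix x y :: complex and p :: "rat poly"
  assume x: "x \<in> N" and p: "irreducible p \<and> poly (map_poly of_rat p) x = 0"
    and y: "poly (map_poly of_rat p) y = 0"
  have x_alg: "poly_over \<rat> (map_poly of_rat p)" "map_poly of_rat p \<noteq> (0 :: complex poly)"
    "poly (map_poly of_rat p) x = 0"
    using poly_over_Rats_map_of_rat p by (auto simp: map_poly_eq_0_iff)
  have x_to_y: "poly (map_poly id a) y = 0" if a: "poly_over \<rat> a" "poly a x = 0" for a
  proof -
    obtain a' where a': "a = map_poly of_rat a'"
      using ratpolyE a(1) unfolding poly_over_def by blast
    then have "p dvd a'" using irreducible_dvd_if_common_root[of p x a'] p a(2) by simp
    then obtain c where "a' = p * c" by (elim dvdE)
    then show ?thesis using a' y by (simp add: map_poly_of_rat_mult)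
  qed
  have "ring_hom_on \<rat> id" by (simp add: ring_hom_on_def)
  then obtain \<psi>0 where \<psi>0: "ring_hom_on (adjoin \<rat> x) \<psi>0" "\<psi>0 x = y"
    using ring_hom_on_adjoin_extend[OF Q_subalgebra_Rats _ x_to_y] by blast
  note Q_x = subfield_adjoin[OF is_subfield_Rats Q_finite_dim_Rats x_alg]
    Q_finite_dim_adjoin[OF is_subfield_Rats Q_finite_dim_Rats x_alg]
  obtain E \<psi> where E: "is_subfield E" "Q_finite_dim E" "adjoin \<rat> x \<subseteq> E" "{z. poly f z = 0} \<subseteq> E"
    and \<psi>: "ring_hom_on E \<psi>" "\<And>c. c \<in> adjoin \<rat> x \<Longrightarrow> \<psi> c = \<psi>0 c"
      "\<And>z. z \<in> {z. poly f z = 0} \<Longrightarrow> poly f (\<psi> z) = 0"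
    by (rule ring_hom_on_extend_to_roots[OF Q_x \<psi>0(1) f order_refl]) (rule that)
  have E_alg: "Q_subalgebra E" using subfield_imp_Q_subalgebra[OF E(1)] .
  have "N \<subseteq> E" unfolding N_def by (rule Q_algebra_hull_minimal[OF E_alg E(4)])
  moreover have "\<psi> ` {z. poly f z = 0} \<subseteq> {z. poly f z = 0}" using \<psi>(3) by auto
  ultimately have "\<psi> x \<in> N"
    using ring_hom_on_Q_algebra_hull[OF E_alg _ \<psi>(1)] x unfolding N_def by blast
  moreover have "\<psi> x = y" using \<psi>(2) \<psi>0(2) mem_adjoin[OF Q_subalgebra_Rats] by simp
  ultimately show "y \<in> N" by simp
qed

section \<open>Degrees of Galois closures and composita\<close>

lemma galois_closure_subfield: "is_subfield (galois_closure E)"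
  and subset_galois_closure: "E \<subseteq> galois_closure E"
  and galois_closure_minimal: "is_subfield F \<Longrightarrow> normal_over_Q F \<Longrightarrow> E \<subseteq> F \<Longrightarrow> galois_closure E \<subseteq> F"
  unfolding galois_closure_def is_subfield_def normal_over_Q_def by blast+

lemma subset_compositum: "A \<union> B \<subseteq> compositum A B"
  and compositum_minimal: "is_subfield F \<Longrightarrow> A \<union> B \<subseteq> F \<Longrightarrow> compositum A B \<subseteq> F"
  unfolding compositum_def is_subfield_def by blast+

lemma normal_over_Q_Rats: "normal_over_Q \<rat>"
  unfolding normal_over_Q_def
proof (intro ballI allI impI)
  fix x y :: complex and p :: "rat poly"
  assume x: "x \<in> \<rat>" and p: "irreducible p \<and> poly (map_poly of_rat p) x = 0"
    and y: "poly (map_poly of_rat p) y = 0"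
  obtain r where r: "x = of_rat r" using x by (auto simp: Rats_def)
  have lin: "map_poly (of_rat :: rat \<Rightarrow> complex) [:-r, 1:] = [:-of_rat r, 1:]"
    by (rule poly_eqI) (simp add: coeff_map_poly coeff_pCons of_rat_minus split: nat.split)
  have "p dvd [:-r, 1:]" using irreducible_dvd_if_common_root[of p x "[:-r, 1:]"] p lin r by simp
  then obtain c where "[:-r, 1:] = p * c" by (elim dvdE)
  then have "poly (map_poly of_rat [:-r, 1:]) y = 0" using y by (simp add: map_poly_of_rat_mult)
  then show "y \<in> \<rat>" using lin r x by simp
qed

lemma galois_closure_Rats: "galois_closure \<rat> = \<rat>"
  using galois_closure_minimal[OF is_subfield_Rats normal_over_Q_Rats order_refl]
    Rats_subset_subfield[OF galois_closure_subfield] by blast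

lemma Q_finite_dim_galois_closure:
  assumes K: "number_field K"
  shows "Q_finite_dim (galois_closure K)"
proof -
  have K_field: "is_subfield K" and "Q_finite_dim K"
    using K by (auto simp: number_field_def Q_finite_dim_def)
  obtain B where B: "B \<subseteq> K" "K \<subseteq> Q.span B" "finite B"
    using Q_finite_dim_basis[OF \<open>Q_finite_dim K\<close>] by metis
  have "\<exists>g. poly_over \<rat> g \<and> g \<noteq> 0 \<and> poly g b = 0" if "b \<in> B" for b
  proof -
    have "b ^ i \<in> K" for i
      using Q_subalgebra_power[OF subfield_imp_Q_subalgebra[OF K_field]] B(1) that by blast
    then obtain g where "poly_over \<rat> g" "g \<noteq> 0" "poly g b = 0"
      using algebraic_if_powers_in_Q_finite_dim[OF \<open>Q_finite_dim K\<close>] by blast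
    then show ?thesis by blast
  qed
  then have "\<forall>b\<in>B. \<exists>g. poly_over \<rat> g \<and> g \<noteq> 0 \<and> poly g b = 0" by blast
  from bchoice[OF this] obtain g
    where g: "\<forall>b\<in>B. poly_over \<rat> (g b) \<and> g b \<noteq> 0 \<and> poly (g b) b = 0" ..
  define f where "f = (\<Prod>b\<in>B. g b)"
  have "poly_over \<rat> f" unfolding f_def using g by (intro poly_over_prod[OF Q_subalgebra_Rats]) blast
  moreover have "f \<noteq> 0" unfolding f_def using g B(3) by auto
  ultimately have f: "poly_over \<rat> f" "f \<noteq> 0" .
  define N where "N = Q_algebra_hull {z. poly f z = 0}"
  have "B \<subseteq> N"
  proof
    fix b assume "b \<in> B"
    then have "poly f b = 0" unfolding f_def poly_prod using g B(3) by (intro prod_zero) auto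
    then show "b \<in> N" unfolding N_def by (simp add: Q_algebra_hull.base)
  qed
  then have "Q.span B \<subseteq> N"
    using Q.span_minimal Q_subalgebra_subspace[OF Q_subalgebra_Q_algebra_hull]
    unfolding N_def by blast
  then have "K \<subseteq> N" using B(2) by blast
  then have "galois_closure K \<subseteq> N"
    using galois_closure_minimal splitting_field_subfield(1)[OF f] splitting_field_normal[OF f]
    unfolding N_def by blast
  then show ?thesis
    using Q_finite_dim_subset splitting_field_subfield(2)[OF f] unfolding N_def by blast
qed

lemma compositum_subset_span_mult:
  assumes F: "is_subfield F" "BF \<subseteq> F" "F \<subseteq> Q.span BF"
    and G: "is_subfield G" "BG \<subseteq> G" "G \<subseteq> Q.span BG" and fin: "finite BF" "finite BG"
  shows "compositum F G \<subseteq> Q.span {a * b |a b. a \<in> BF \<and> b \<in> BG}"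
proof -
  define P where "P = {a * b |a b. a \<in> BF \<and> b \<in> BG}"
  have FG_span: "x * y \<in> Q.span P" if "x \<in> F" "y \<in> G" for x y
    using Q_span_mult[of x BF y BG] that F(3) G(3) by (auto simp: P_def)
  have "1 \<in> F" "1 \<in> G" using F(1) G(1) by (auto simp: is_subfield_def)
  then have "F \<subseteq> Q.span P" "G \<subseteq> Q.span P" using FG_span[OF _ \<open>1 \<in> G\<close>] FG_span[OF \<open>1 \<in> F\<close>] by auto
  have "p * q \<in> Q.span P" if pq: "p \<in> P" "q \<in> P" for p q
  proof -
    obtain a b a' b' where ab: "a \<in> BF" "b \<in> BG" "a' \<in> BF" "b' \<in> BG" "p = a * b" "q = a' * b'"
      using pq by (auto simp: P_def)
    then have "a * a' \<in> F" "b * b' \<in> G" using F(1,2) G(1,2) unfolding is_subfield_def by blast+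
    moreover have "p * q = (a * a') * (b * b')" using ab(5,6) by (simp add: mult_ac)
    ultimately show ?thesis using FG_span by simp
  qed
  then have PP_span: "Q.span {p * q |p q. p \<in> P \<and> q \<in> P} \<subseteq> Q.span P"
    by (intro Q.span_minimal) auto
  have "Q_subalgebra (Q.span P)"
    unfolding Q_subalgebra_def
  proof (intro conjI ballI)
    show "\<rat> \<subseteq> Q.span P" using \<open>F \<subseteq> Q.span P\<close> Rats_subset_subfield[OF F(1)] by blast
    fix x y assume xy: "x \<in> Q.span P" "y \<in> Q.span P"
    then show "x + y \<in> Q.span P" by (rule Q.span_add)
    show "x * y \<in> Q.span P" using Q_span_mult[OF xy] PP_span by blast
  qed
  moreover have "finite P"
    using fin finite_image_set2[of "\<lambda>a. a \<in> BF" "\<lambda>b. b \<in> BG" "\<lambda>a b. a * b"] by (simp add: P_def)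
  then have "Q_finite_dim (Q.span P)" unfolding Q_finite_dim_def by blast
  ultimately have "is_subfield (Q.span P)" by (rule Q_subalgebra_finite_dim_imp_subfield)
  then have "compositum F G \<subseteq> Q.span P"
    using compositum_minimal \<open>F \<subseteq> Q.span P\<close> \<open>G \<subseteq> Q.span P\<close> by blast
  then show ?thesis unfolding P_def .
qed

lemma Q_dim_compositum_le:
  assumes F: "is_subfield F" "Q_finite_dim F" and G: "is_subfield G" "Q_finite_dim G"
  shows "Q_finite_dim (compositum F G)" "Q.dim (compositum F G) \<le> Q.dim F * Q.dim G"
proof -
  obtain BF where BF: "BF \<subseteq> F" "F \<subseteq> Q.span BF" "card BF = Q.dim F" "finite BF"
    using Q_finite_dim_basis[OF F(2)] by metis
  obtain BG where BG: "BG \<subseteq> G" "G \<subseteq> Q.span BG" "card BG = Q.dim G" "finite BG"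
    using Q_finite_dim_basis[OF G(2)] by metis
  define P where "P = {a * b |a b. a \<in> BF \<and> b \<in> BG}"
  have C_span: "compositum F G \<subseteq> Q.span P"
    unfolding P_def using compositum_subset_span_mult F(1) BF G(1) BG by blast
  have P_image: "P = (\<lambda>(a, b). a * b) ` (BF \<times> BG)" by (auto simp: P_def)
  then have "finite P" using BF(4) BG(4) by simp
  then show "Q_finite_dim (compositum F G)" using C_span unfolding Q_finite_dim_def by blast
  have "Q.dim (compositum F G) \<le> card P" using Q.dim_le_card[OF C_span \<open>finite P\<close>] .
  also have "\<dots> \<le> card BF * card BG"
    using P_image card_image_le[of "BF \<times> BG" "\<lambda>(a, b). a * b"] BF(4) BG(4)
    by (simp add: card_cartesian_product)
  finally show "Q.dim (compositum F G) \<le> Q.dim F * Q.dim G" using BF(3) BG(3) by simp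
qed

lemma Q_dim_compositum_eq_iff:
  assumes F: "is_subfield F" "Q_finite_dim F" and G: "is_subfield G" "Q_finite_dim G"
  shows "Q.dim F = Q.dim (compositum F G) \<and> Q.dim G = Q.dim (compositum F G) \<longleftrightarrow> F = G"
proof
  assume "Q.dim F = Q.dim (compositum F G) \<and> Q.dim G = Q.dim (compositum F G)"
  moreover have "F \<subseteq> compositum F G" "G \<subseteq> compositum F G" using subset_compositum by auto
  ultimately have "F = compositum F G" "G = compositum F G"
    using Q_subspace_eq_if_dim_eq[OF Q_dim_compositum_le(1)[OF assms]]
      Q_subalgebra_subspace[OF subfield_imp_Q_subalgebra[OF F(1)]]
      Q_subalgebra_subspace[OF subfield_imp_Q_subalgebra[OF G(1)]] by auto
  then show "F = G" by simp
next
  assume "F = G"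
  then have "compositum F G = F" using compositum_minimal[OF F(1)] subset_compositum by blast
  then show "Q.dim F = Q.dim (compositum F G) \<and> Q.dim G = Q.dim (compositum F G)"
    using \<open>F = G\<close> by simp
qed

lemma Q_dim_subfield_ge_1: "is_subfield F \<Longrightarrow> Q_finite_dim F \<Longrightarrow> 1 \<le> Q.dim F"
  using Q_dim_mono[OF _ Rats_subset_subfield] Q_dim_Rats by fastforce

lemma Q_dim_galois_closure_eq_1_iff:
  assumes "number_field K"
  shows "Q.dim (galois_closure K) = 1 \<longleftrightarrow> K = \<rat>"
proof
  assume "Q.dim (galois_closure K) = 1"
  then have "\<rat> = galois_closure K"
    using Q_subspace_eq_if_dim_eq[OF Q_finite_dim_galois_closure[OF assms]
        Rats_subset_subfield[OF galois_closure_subfield] Q_subalgebra_subspace[OF Q_subalgebra_Rats]]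
    by (simp add: Q_dim_Rats)
  then show "K = \<rat>"
    using subset_galois_closure[of K] Rats_subset_subfield assms by (auto simp: number_field_def)
qed (simp add: galois_closure_Rats Q_dim_Rats)

lemma delta_arith:
  fixes a b n :: nat
  assumes a: "a \<ge> 1" and b: "b \<ge> 1" and an: "a \<le> n" and bn: "b \<le> n" and nab: "n \<le> a * b"
  defines "d \<equiv> 2 / real n + 1 - 1 / real a - 1 / real b"
  shows "1 / real n \<le> d" "d \<le> 1" "d = 1 \<longleftrightarrow> a = n \<and> b = n" "d = 1 / real n \<longleftrightarrow> a = 1 \<or> b = 1"
proof -
  have A: "real a \<ge> 1" and B: "real b \<ge> 1" and N: "real n \<ge> 1" using a b an by auto
  have an': "1 / real n \<le> 1 / real a" using an a by (simp add: frac_le)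
  have bn': "1 / real n \<le> 1 / real b" using bn b by (simp add: frac_le)
  have abn: "1 / (real a * real b) \<le> 1 / real n"
    using nab N by (simp add: frac_le flip: of_nat_mult)
  have prod: "(1 - 1 / real a) * (1 - 1 / real b) \<ge> 0" using A B by simp
  have lower:
    "d - 1 / real n = (1 / real n - 1 / (real a * real b)) + (1 - 1 / real a) * (1 - 1 / real b)"
    unfolding d_def using A B by (simp add: field_simps)
  have upper: "1 - d = (1 / real a - 1 / real n) + (1 / real b - 1 / real n)"
    unfolding d_def by simp
  show "1 / real n \<le> d" using lower abn prod by linarith
  show "d \<le> 1" using upper an' bn' by linarith
  show "d = 1 \<longleftrightarrow> a = n \<and> b = n"
  proof
    assume "d = 1"
    then have "1 / real a = 1 / real n" "1 / real b = 1 / real n" using upper an' bn' by linarith+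
    then show "a = n \<and> b = n" using A B N by (simp add: field_simps)
  qed (simp add: d_def)
  show "d = 1 / real n \<longleftrightarrow> a = 1 \<or> b = 1"
  proof
    assume "d = 1 / real n"
    then have "(1 - 1 / real a) * (1 - 1 / real b) = 0" using lower abn prod by linarith
    then have "1 / real a = 1 \<or> 1 / real b = 1" by simp
    then show "a = 1 \<or> b = 1" using A B by (auto simp: field_simps)
  next
    assume "a = 1 \<or> b = 1"
    then show "d = 1 / real n" using an bn nab by (auto simp: d_def)
  qed
qed

theorem proposition2p12:
  fixes K L :: "complex set"
  assumes "number_field K" and "number_field L"
  shows "1 / real (qdegree (compositum (galois_closure K) (galois_closure L))) \<le> delta K L
       \<and> delta K L \<le> 1
       \<and> (delta K L = 1 \<longleftrightarrow> galois_closure K = galois_closure L)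
       \<and> (delta K L = 1 / real (qdegree (compositum (galois_closure K) (galois_closure L)))
            \<longleftrightarrow> K = \<rat> \<or> L = \<rat>)"
proof -
  define GK GL where "GK = galois_closure K" and "GL = galois_closure L"
  have fields: "is_subfield GK" "Q_finite_dim GK" "is_subfield GL" "Q_finite_dim GL"
    using galois_closure_subfield Q_finite_dim_galois_closure assms by (auto simp: GK_def GL_def)
  note C = Q_dim_compositum_le[OF fields]
  have "Q.dim GK \<le> Q.dim (compositum GK GL)" "Q.dim GL \<le> Q.dim (compositum GK GL)"
    using Q_dim_mono[OF C(1)] subset_compositum by auto
  note arith = delta_arith[OF Q_dim_subfield_ge_1[OF fields(1,2)] Q_dim_subfield_ge_1[OF fields(3,4)]
      this C(2)]
  show ?thesis
    using arith Q_dim_compositum_eq_iff[OF fields]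
      Q_dim_galois_closure_eq_1_iff[OF assms(1)] Q_dim_galois_closure_eq_1_iff[OF assms(2)]
    unfolding delta_def qdegree_def GK_def GL_def by simp
qed

end
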